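(* Fix a natural number $M\ge1$. In the random coefficients perturbed utility model described in the context, suppose Assumptions 1, 2, 3, 5 and B.1 (as stated in the context) hold with this same $M$. Then every $M$-th order moment \[ \int\beta_{k_1,\ell_1}\cdots\beta_{k_M,\ell_M}\,d\nu(\beta),\qquad k_m\in\{1,\dots,K\},\ \ell_m\in\{1,\dots,d_{k_m}\}, \] is identified.
   Context: Model. There are $K$ goods. For each good $k\in\{1,\dots,K\}$ there is a covariate vector $x_k=(x_{k,1},\dots,x_{k,d_k})'\in\mathbb{R}^{d_k}$ and a random coefficient vector $\beta_k=(\beta_{k,1},\dots,\beta_{k,d_k})'\in\mathbb{R}^{d_k}$; write $x=(x_1',\dots,x_K')'\in\mathbb{R}^{d}$ with $d=\sum_k d_k$, and $\beta=(\beta_1',\dots,\beta_K')'$. Let $\varepsilon$ be an unobservable of unrestricted dimension in a measurable space $E$, $B\subseteq\mathbb{R}^K$ a feasibility set and $D:B\times E\to\mathbb{R}\cup\{-\infty\}$ a disturbance. Choices satisfy $Y(x,\beta,\varepsilon)\in\arg\max_{y\in B}\sum_{k=1}^K y_k(\beta_k'x_k)+D(y,\varepsilon)$ (argmax nonempty). The average structural function is $\overline{Y}(x)=\int Y(x,\beta,\varepsilon)\,d\tau(\beta,\varepsilon)$ for a probability measure $\tau$ not depending on $x$; $\overline{Y}_k$ is its $k$-th component. Assumption 1: under $\tau$, $\beta$ and $\varepsilon$ are independent, $\tau=\nu\otimes\mu$, and $\overline{Y}(x)$ is finite. Define $\overline{Y}(x,\beta)=\int Y(x,\beta,\varepsilon)\,d\mu(\varepsilon)$,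 so $\overline{Y}(x)=\int\overline{Y}(x,\beta)\,d\nu(\beta)$. Let $\overline{B}$ be the convex hull of $B$ and $\overline{D}(y)=\sup\{\int D(\tilde Y(\varepsilon),\varepsilon)\,d\mu(\varepsilon):\tilde Y:E\to B\text{ measurable},\ \int\tilde Y\,d\mu=y\}$ ($\sup\emptyset=-\infty$). Assumption 2: (i) $\overline{Y}(x,\beta)$ equals (is the unique element of) $\arg\max_{y\in\overline{B}}\sum_k y_k(\beta_k'x_k)+\overline{D}(y)$; (ii) $\overline{B}$ is nonempty, closed, convex; (iii) $\overline{D}:\mathbb{R}^K\to\mathbb{R}\cup\{-\infty\}$ is concave, upper semicontinuous, finite at some $y\in\overline{B}$. Define $V(u)=\max_{y\in\overline{B}}\sum_k y_ku_k+\overline{D}(y)$, $u\in\mathbb{R}^K$, and $\partial_\gamma V=\partial_{\gamma_1}\cdots\partial_{\gamma_m}V$ for $\gamma\in\{1,\dots,K\}^m$. Assumption 3: all covariates are continuous, and each $x_k$ is specific to good $k$ (enters only $\beta_k'x_k$). Assumption 5 (for $M$): (i) for each $k$ and every $M$-th order partial derivative, $\partial_{x_{k_1,\ell_1}}\cdots\partial_{x_{k_M,\ell_M}}\overline{Y}_k(0)=\int\partial_{x_{k_1,\ell_1}}\cdots\partial_{x_{k_M,\ell_M}}\overline{Y}_k(0,\beta)\,d\nu(\beta)$; (ii) all $M$-th order moments $\int\beta_{k_1,\ell_1}\cdots\beta_{k_M,\ell_M}\,d\nu$ exist and are finite; (iii) $V$ is $(M+1)$-times continuously differentiable near $0$;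 (iv) $\partial_\gamma V(0)\ne0$ for all $\gamma\in\{1,\dots,K\}^{M+1}$; (v) $\overline{Y}(x)$ is known on a neighborhood of $0$, or more generally on $H\cap\mathbb{R}^d_+$ for a neighborhood $H$ of $0$. Assumption B.1: $V$ is known in a neighborhood of $0$, up to an additive constant. Identification: a quantity is identified if it is uniquely determined by the objects assumed known (the average structural function on the stated region and $V$ near $0$ up to a constant), i.e. all specifications $(B,D,\mu,\nu)$ satisfying the hypotheses and generating the same known objects yield the same value. *)

theory Defs
  imports "HOL-Probability.Probability"
begin

definition pd :: "'n::finite \<Rightarrow> (real^'n \<Rightarrow> real) \<Rightarrow> real^'n \<Rightarrow> real" where
  "pd c f x = deriv (\<lambda>t. f (x + t *\<^sub>R axis c 1)) 0"

primrec pds :: "'n::finite list \<Rightarrow> (real^'n \<Rightarrow> real) \<Rightarrow> real^'n \<Rightarrow> real" where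
  "pds [] f = f"
| "pds (c # cs) f = pd c (pds cs f)"

primrec pds_exist :: "'n::finite list \<Rightarrow> (real^'n \<Rightarrow> real) \<Rightarrow> real^'n \<Rightarrow> bool" where
  "pds_exist [] f x = True"
| "pds_exist (c # cs) f x =
     ((\<forall>\<^sub>F y in nhds x. pds_exist cs f y) \<and>
      (\<lambda>t. pds cs f (x + t *\<^sub>R axis c 1)) differentiable (at 0))"

definition Ck_on :: "nat \<Rightarrow> (real^'n::finite \<Rightarrow> real) \<Rightarrow> (real^'n) set \<Rightarrow> bool" where
  "Ck_on m f S \<longleftrightarrow> open S \<and>
     (\<forall>cs c x. length cs < m \<longrightarrow> x \<in> S \<longrightarrow>
        (\<lambda>t. pds cs f (x + t *\<^sub>R axis c 1)) differentiable (at 0)) \<and>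
     (\<forall>cs. length cs \<le> m \<longrightarrow> continuous_on S (pds cs f))"

text \<open>Covariates / coefficients are indexed by a finite type 'c; good c is the good
to which covariate c belongs (Assumption 3: each covariate is specific to one good).
idx good b x is the vector (beta_k' x_k)_k.\<close>
definition idx :: "('c::finite \<Rightarrow> 'k::finite) \<Rightarrow> real^'c \<Rightarrow> real^'c \<Rightarrow> real^'k" where
  "idx good b x = (\<chi> k. \<Sum>c\<in>{c. good c = k}. b $ c * x $ c)"

definition ext_int :: "'a measure \<Rightarrow> ('a \<Rightarrow> ereal) \<Rightarrow> ereal" where
  "ext_int \<mu> f = enn2ereal (\<integral>\<^sup>+ x. e2ennreal (f x) \<partial>\<mu>)
                - enn2ereal (\<integral>\<^sup>+ x. e2ennreal (- f x) \<partial>\<mu>)"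

definition Dbar :: "(real^'k::finite) set \<Rightarrow> (real^'k \<Rightarrow> 'e \<Rightarrow> ereal) \<Rightarrow> 'e measure
                    \<Rightarrow> real^'k \<Rightarrow> ereal" where
  "Dbar B D \<mu> y = Sup {ext_int \<mu> (\<lambda>e. D (Yt e) e) | Yt :: 'e \<Rightarrow> real^'k.
      Yt \<in> borel_measurable \<mu> \<and> (\<forall>e\<in>space \<mu>. Yt e \<in> B) \<and>
      integrable \<mu> Yt \<and> integral\<^sup>L \<mu> Yt = y}"

definition Vfun :: "(real^'k::finite) set \<Rightarrow> (real^'k \<Rightarrow> 'e \<Rightarrow> ereal) \<Rightarrow> 'e measure
                    \<Rightarrow> real^'k \<Rightarrow> ereal" where
  "Vfun B D \<mu> u = Sup {ereal (u \<bullet> y) + Dbar B D \<mu> y | y. y \<in> convex hull B}"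

definition ASFb :: "'e measure \<Rightarrow> (real^'c \<Rightarrow> real^'c \<Rightarrow> 'e \<Rightarrow> real^'k::finite)
                    \<Rightarrow> real^'c \<Rightarrow> real^'c \<Rightarrow> real^'k" where
  "ASFb \<mu> Y x b = integral\<^sup>L \<mu> (\<lambda>e. Y x b e)"

definition ASF :: "(real^'c::finite) measure \<Rightarrow> 'e measure
                   \<Rightarrow> (real^'c \<Rightarrow> real^'c \<Rightarrow> 'e \<Rightarrow> real^'k::finite) \<Rightarrow> real^'c \<Rightarrow> real^'k" where
  "ASF \<nu> \<mu> Y x = integral\<^sup>L (\<nu> \<Otimes>\<^sub>M \<mu>) (\<lambda>(b, e). Y x b e)"

definition rc_model :: "('c::finite \<Rightarrow> 'k::finite) \<Rightarrow> (real^'k) set \<Rightarrow> (real^'k \<Rightarrow> 'e \<Rightarrow> ereal)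
     \<Rightarrow> 'e measure \<Rightarrow> (real^'c \<Rightarrow> real^'c \<Rightarrow> 'e \<Rightarrow> real^'k) \<Rightarrow> bool" where
  "rc_model good B D \<mu> Y \<longleftrightarrow>
     (\<forall>y\<in>B. \<forall>e\<in>space \<mu>. D y e \<noteq> \<infinity>) \<and>
     (\<forall>x b. \<forall>e\<in>space \<mu>. Y x b e \<in> B \<and>
        (\<forall>y\<in>B. ereal (y \<bullet> idx good b x) + D y e
                 \<le> ereal (Y x b e \<bullet> idx good b x) + D (Y x b e) e))"

text \<open>Assumption 1 (tau = nu \<otimes> mu, both probability measures, nu a Borel measure on
R^d, and the ASF finite, i.e. Y(x,.,.) integrable under tau).\<close>
definition assm1 :: "(real^'c::finite) measure \<Rightarrow> 'e measure
     \<Rightarrow> (real^'c \<Rightarrow> real^'c \<Rightarrow> 'e \<Rightarrow> real^'k::finite) \<Rightarrow> bool" where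
  "assm1 \<nu> \<mu> Y \<longleftrightarrow> prob_space \<nu> \<and> sets \<nu> = sets borel \<and> prob_space \<mu> \<and>
     (\<forall>x. integrable (\<nu> \<Otimes>\<^sub>M \<mu>) (\<lambda>(b, e). Y x b e))"

definition ereal_concave :: "(real^'k::finite \<Rightarrow> ereal) \<Rightarrow> bool" where
  "ereal_concave f \<longleftrightarrow> (\<forall>y z. \<forall>t::real. 0 \<le> t \<and> t \<le> 1 \<longrightarrow>
      ereal t * f y + ereal (1 - t) * f z \<le> f (t *\<^sub>R y + (1 - t) *\<^sub>R z))"

definition ereal_usc :: "(real^'k::finite \<Rightarrow> ereal) \<Rightarrow> bool" where
  "ereal_usc f \<longleftrightarrow> (\<forall>y. Limsup (at y) f \<le> f y)"

definition assm2 :: "('c::finite \<Rightarrow> 'k::finite) \<Rightarrow> (real^'k) set \<Rightarrow> (real^'k \<Rightarrow> 'e \<Rightarrow> ereal)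
     \<Rightarrow> 'e measure \<Rightarrow> (real^'c \<Rightarrow> real^'c \<Rightarrow> 'e \<Rightarrow> real^'k) \<Rightarrow> bool" where
  "assm2 good B D \<mu> Y \<longleftrightarrow>
     (\<forall>x b. {y \<in> convex hull B. \<forall>z \<in> convex hull B.
               ereal (z \<bullet> idx good b x) + Dbar B D \<mu> z
                 \<le> ereal (y \<bullet> idx good b x) + Dbar B D \<mu> y} = {ASFb \<mu> Y x b}) \<and>
     convex hull B \<noteq> {} \<and> closed (convex hull B) \<and> convex (convex hull B) \<and>
     ereal_concave (Dbar B D \<mu>) \<and> ereal_usc (Dbar B D \<mu>) \<and>
     (\<exists>y \<in> convex hull B. \<bar>Dbar B D \<mu> y\<bar> \<noteq> \<infinity>)"

text \<open>Assumption 5 (i)--(iv) for M. (v) and Assumption B.1 concern what is known and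
appear in the identification statement itself.\<close>
definition assm5 :: "nat \<Rightarrow> (real^'k::finite) set \<Rightarrow> (real^'k \<Rightarrow> 'e \<Rightarrow> ereal)
     \<Rightarrow> 'e measure \<Rightarrow> (real^'c::finite) measure \<Rightarrow> (real^'c \<Rightarrow> real^'c \<Rightarrow> 'e \<Rightarrow> real^'k) \<Rightarrow> bool" where
  "assm5 M B D \<mu> \<nu> Y \<longleftrightarrow>
     (\<forall>k. \<forall>cs. length cs = M \<longrightarrow>
        pds_exist cs (\<lambda>x. ASF \<nu> \<mu> Y x $ k) 0 \<and>
        pds cs (\<lambda>x. ASF \<nu> \<mu> Y x $ k) 0
          = integral\<^sup>L \<nu> (\<lambda>b. pds cs (\<lambda>x. ASFb \<mu> Y x b $ k) 0)) \<and>
     (\<forall>cs. length cs = M \<longrightarrow> integrable \<nu> (\<lambda>b. prod_list (map (\<lambda>c. b $ c) cs))) \<and>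
     (\<exists>\<epsilon>>0. (\<forall>u\<in>ball 0 \<epsilon>. \<bar>Vfun B D \<mu> u\<bar> \<noteq> \<infinity>) \<and>
             Ck_on (Suc M) (\<lambda>u. real_of_ereal (Vfun B D \<mu> u)) (ball 0 \<epsilon>)) \<and>
     (\<forall>\<gamma>. length \<gamma> = Suc M \<longrightarrow> pds \<gamma> (\<lambda>u. real_of_ereal (Vfun B D \<mu> u)) 0 \<noteq> 0)"

end

(* By the envelope theorem, the mean choice given the coefficients is a gradient of V:
   ASFb(x, beta)_k = d_k V(idx beta x), with idx beta x = (beta_k' x_k)_k.  Moving a covariate
   x_c only moves the index of its own good, at speed beta_c, so differentiating M times at
   x = 0 and averaging over beta gives
     d_{c_1 ... c_M} ASF_k(0) = E[beta_{c_1} ... beta_{c_M}] * d_{good c_1 ... good c_M k} V(0).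
   The left side only depends on the ASF on the orthant near 0, and the last factor only on V
   up to an additive constant and is nonzero; hence the moment is identified. *)

theory Submission
  imports Defs
begin

lemma eventually_nhds_line_in_open:
  fixes x :: "'a::real_normed_vector"
  assumes "open S" "x \<in> S"
  shows "\<forall>\<^sub>F t in nhds 0. x + t *\<^sub>R v \<in> S"
proof -
  have "((\<lambda>t. x + t *\<^sub>R v) \<longlongrightarrow> x + 0 *\<^sub>R v) (nhds 0)"
    by (intro tendsto_intros filterlim_ident)
  then show ?thesis using assms by (auto intro: topological_tendstoD)
qed

lemma deriv_add_const: "deriv (\<lambda>t. h t + (a::real)) x = deriv h x"
  by (simp add: field_derivative_eq_vector_derivative vector_derivative_def
      has_vector_derivative_add_const)

lemma deriv_eq_of_eq_on_right:
  fixes h1 h2 :: "real \<Rightarrow> real"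
  assumes "h1 differentiable (at 0)" "h2 differentiable (at 0)"
    and "d > 0" "\<And>t. 0 \<le> t \<Longrightarrow> t < d \<Longrightarrow> h1 t = h2 t"
  shows "deriv h1 0 = deriv h2 0"
proof -
  have D1: "(h1 has_field_derivative deriv h1 0) (at 0 within {0..})"
    and D2: "(h2 has_field_derivative deriv h2 0) (at 0 within {0..})"
    using assms(1,2) DERIV_deriv_iff_real_differentiable has_field_derivative_at_within by blast+
  have "(h2 has_field_derivative deriv h1 0) (at 0 within {0..})"
    by (rule has_field_derivative_transform_within[OF D1 \<open>d > 0\<close>]) (use assms(4) in auto)
  then show ?thesis
    by (rule has_field_derivative_unique[OF _ D2]) (simp add: at_within_Ici_at_right)
qed

lemma pds_append: "pds (cs @ ds) f = pds cs (pds ds f)"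
  by (induction cs) auto

lemma pd_add_const: "pd c (\<lambda>u. f u + (a::real)) = pd c f"
  by (simp add: pd_def fun_eq_iff deriv_add_const)

lemma pds_add_const:
  assumes "cs \<noteq> []"
  shows "pds cs (\<lambda>u. f u + (a::real)) = pds cs f"
proof -
  obtain ds c where "cs = ds @ [c]"
    using assms by (cases cs rule: rev_cases) auto
  then show ?thesis by (simp add: pds_append pd_add_const)
qed

lemma pds_cong_nhds:
  assumes "\<forall>\<^sub>F z in nhds x. f z = g z"
  shows "pds cs f x = pds cs g x"
  using assms
proof (induction cs arbitrary: x)
  case Nil
  then show ?case by (simp add: eventually_nhds_x_imp_x[of "\<lambda>z. f z = g z"])
next
  case (Cons c cs)
  from Cons.prems obtain S where S: "open S" "x \<in> S" "\<forall>z\<in>S. f z = g z"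
    unfolding eventually_nhds by blast
  have "pds cs f z = pds cs g z" if "z \<in> S" for z
    by (rule Cons.IH)
       (use eventually_nhds_in_open[OF S(1) that] S(3) in \<open>auto elim: eventually_mono\<close>)
  then have "\<forall>\<^sub>F t in nhds 0. pds cs f (x + t *\<^sub>R axis c 1) = pds cs g (x + t *\<^sub>R axis c 1)"
    using eventually_nhds_line_in_open[OF S(1,2), of "axis c 1"] by (auto elim: eventually_mono)
  then show ?case by (simp add: pd_def deriv_cong_ev)
qed

lemma pds_real_of_ereal_shift:
  assumes "\<forall>\<^sub>F u in nhds x. V1 u = V2 u + ereal a" "\<forall>\<^sub>F u in nhds x. \<bar>V2 u\<bar> \<noteq> \<infinity>"
    and "cs \<noteq> []"
  shows "pds cs (\<lambda>u. real_of_ereal (V1 u)) x = pds cs (\<lambda>u. real_of_ereal (V2 u)) x"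
proof -
  have "\<forall>\<^sub>F u in nhds x. real_of_ereal (V1 u) = real_of_ereal (V2 u) + a"
    using assms(1,2) by eventually_elim (auto simp: real_of_ereal_add)
  then have "pds cs (\<lambda>u. real_of_ereal (V1 u)) x = pds cs (\<lambda>u. real_of_ereal (V2 u) + a) x"
    by (rule pds_cong_nhds)
  then show ?thesis by (simp add: pds_add_const \<open>cs \<noteq> []\<close>)
qed

text \<open>The derivatives exist two-sidedly, so each can be computed as a right derivative
  along a coordinate ray, which stays inside the orthant.\<close>
lemma pds_eq_of_eq_on_orthant:
  fixes f1 f2 :: "real^'n::finite \<Rightarrow> real"
  assumes "open U" "y \<in> U" "\<forall>c. 0 \<le> y $ c"
    and "\<forall>z\<in>U. (\<forall>c. 0 \<le> z $ c) \<longrightarrow> f1 z = f2 z"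
    and "pds_exist cs f1 y" "pds_exist cs f2 y"
  shows "pds cs f1 y = pds cs f2 y"
  using assms
proof (induction cs arbitrary: y U)
  case Nil
  then show ?case by simp
next
  case (Cons c cs)
  have "\<forall>\<^sub>F z in nhds y. z \<in> U \<and> pds_exist cs f1 z \<and> pds_exist cs f2 z"
    using Cons.prems eventually_nhds_in_open[OF Cons.prems(1,2)] by (auto intro: eventually_conj)
  then obtain S where S: "open S" "y \<in> S"
    "\<forall>z\<in>S. z \<in> U \<and> pds_exist cs f1 z \<and> pds_exist cs f2 z"
    unfolding eventually_nhds by blast
  have eq: "pds cs f1 z = pds cs f2 z" if "z \<in> S" "\<forall>c. 0 \<le> z $ c" for z
    by (rule Cons.IH[OF S(1) that]) (use S Cons.prems(4) that in auto)
  obtain d where d: "d > 0" "\<forall>t. dist t 0 < d \<longrightarrow> y + t *\<^sub>R axis c 1 \<in> S"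
    using eventually_nhds_line_in_open[OF S(1,2)] unfolding eventually_nhds_metric by blast
  have "deriv (\<lambda>t. pds cs f1 (y + t *\<^sub>R axis c 1)) 0 = deriv (\<lambda>t. pds cs f2 (y + t *\<^sub>R axis c 1)) 0"
  proof (rule deriv_eq_of_eq_on_right[OF _ _ d(1)])
    fix t :: real assume "0 \<le> t" "t < d"
    then show "pds cs f1 (y + t *\<^sub>R axis c 1) = pds cs f2 (y + t *\<^sub>R axis c 1)"
      using d(2) Cons.prems(3) by (intro eq) (auto simp: axis_def)
  qed (use Cons.prems(5,6) in simp_all)
  then show ?case by (simp add: pd_def)
qed

lemma pd_eq_of_affine_minorant:
  fixes V :: "real^'n::finite \<Rightarrow> real"
  assumes S: "open S" "u \<in> S"
    and minorant: "\<And>v. v \<in> S \<Longrightarrow> v \<bullet> y + d \<le> V v"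
    and touch: "V u = u \<bullet> y + d"
    and diff: "(\<lambda>t. V (u + t *\<^sub>R axis k 1)) differentiable (at 0)"
  shows "pd k V u = y $ k"
proof -
  define \<phi> where "\<phi> t = V (u + t *\<^sub>R axis k 1) - t * y $ k" for t
  have "(\<phi> has_field_derivative pd k V u - y $ k) (at 0)"
    using diff unfolding \<phi>_def pd_def DERIV_deriv_iff_real_differentiable[symmetric]
    by (auto intro!: derivative_eq_intros)
  moreover have "\<forall>\<^sub>F t in nhds 0. \<phi> 0 \<le> \<phi> t"
    using eventually_nhds_line_in_open[OF S, of "axis k 1"]
  proof eventually_elim
    case (elim t)
    show ?case
      using minorant[OF elim] by (simp add: \<phi>_def touch inner_add_left inner_axis')
  qed
  then have "\<forall>\<^sub>F t in at 0. \<phi> 0 \<le> \<phi> t"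
    by (rule filter_leD[OF at_within_le_nhds])
  ultimately have "(*) (pd k V u - y $ k) = (\<lambda>h. 0)"
    by (intro has_derivative_local_min) (auto simp: has_field_derivative_def)
  from fun_cong[OF this, of 1] show ?thesis by simp
qed

lemma idx_zero: "idx good b 0 = 0"
  by (simp add: idx_def vec_eq_iff)

lemma idx_add_line:
  "idx good b (x + t *\<^sub>R axis c 1) = idx good b x + (t * b $ c) *\<^sub>R axis (good c) 1"
proof -
  have "b $ c' * (x + t *\<^sub>R axis c 1) $ c' = b $ c' * x $ c' + (if c' = c then t * b $ c else 0)"
    for c'
    by (simp add: axis_def algebra_simps)
  then show ?thesis
    by (simp add: idx_def vec_eq_iff sum.distrib axis_def)
qed

lemma pds_comp_idx:
  fixes good :: "'c::finite \<Rightarrow> 'k::finite" and G :: "real^'k \<Rightarrow> real"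
  assumes "open S"
    and comp: "\<And>x. idx good b x \<in> S \<Longrightarrow> A x = G (idx good b x)"
    and diff: "\<And>cs' k u. length cs' < n \<Longrightarrow> u \<in> S \<Longrightarrow>
                 (\<lambda>t. pds cs' G (u + t *\<^sub>R axis k 1)) differentiable (at 0)"
    and "length cs \<le> n" "idx good b x \<in> S"
  shows "pds cs A x = prod_list (map (\<lambda>c. b $ c) cs) * pds (map good cs) G (idx good b x)"
  using assms(4,5)
proof (induction cs arbitrary: x)
  case Nil
  then show ?case using comp by simp
next
  case (Cons c cs)
  define P where "P = prod_list (map (\<lambda>c. b $ c) cs)"
  define \<psi> where "\<psi> s = pds (map good cs) G (idx good b x + s *\<^sub>R axis (good c) 1)" for s
  have "\<forall>\<^sub>F t in nhds 0. idx good b x + t *\<^sub>R (b $ c *\<^sub>R axis (good c) 1) \<in> S"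
    by (rule eventually_nhds_line_in_open) (use assms(1) Cons.prems in auto)
  then have "\<forall>\<^sub>F t in nhds 0. pds cs A (x + t *\<^sub>R axis c 1) = P * \<psi> (t * b $ c)"
    by eventually_elim (use Cons.IH Cons.prems(1) in \<open>simp add: P_def \<psi>_def idx_add_line\<close>)
  then have "pd c (pds cs A) x = deriv (\<lambda>t. P * \<psi> (t * b $ c)) 0"
    unfolding pd_def by (rule deriv_cong_ev) simp
  moreover have "\<psi> differentiable (at 0)"
    using diff Cons.prems unfolding \<psi>_def by simp
  then have "(\<psi> has_field_derivative deriv \<psi> 0) (at (0 * b $ c))"
    by (simp add: DERIV_deriv_iff_real_differentiable)
  then have "((\<lambda>t. \<psi> (t * b $ c)) has_field_derivative deriv \<psi> 0 * b $ c) (at 0)"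
    by (rule DERIV_chain2) (auto intro!: derivative_eq_intros)
  then have "((\<lambda>t. P * \<psi> (t * b $ c)) has_field_derivative P * (deriv \<psi> 0 * b $ c)) (at 0)"
    by (rule DERIV_cmult)
  moreover have "pd (good c) (pds (map good cs) G) (idx good b x) = deriv \<psi> 0"
    unfolding pd_def \<psi>_def ..
  ultimately show ?case
    by (simp add: DERIV_imp_deriv P_def)
qed

lemma ASFb_maximizes:
  assumes "assm2 good B D mu Y"
  shows "ASFb mu Y x b \<in> convex hull B"
    and "z \<in> convex hull B \<Longrightarrow> ereal (z \<bullet> idx good b x) + Dbar B D mu z
           \<le> ereal (ASFb mu Y x b \<bullet> idx good b x) + Dbar B D mu (ASFb mu Y x b)"
  using assms unfolding assm2_def by blast+

lemma Vfun_ge_ASFb: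
  assumes "assm2 good B D mu Y"
  shows "ereal (u \<bullet> ASFb mu Y x b) + Dbar B D mu (ASFb mu Y x b) \<le> Vfun B D mu u"
  unfolding Vfun_def by (rule Sup_upper) (use ASFb_maximizes(1)[OF assms] in blast)

lemma Vfun_idx_eq_ASFb:
  assumes "assm2 good B D mu Y"
  shows "Vfun B D mu (idx good b x)
       = ereal (idx good b x \<bullet> ASFb mu Y x b) + Dbar B D mu (ASFb mu Y x b)"
proof (rule antisym)
  show "Vfun B D mu (idx good b x)
      \<le> ereal (idx good b x \<bullet> ASFb mu Y x b) + Dbar B D mu (ASFb mu Y x b)"
    unfolding Vfun_def
    by (rule Sup_least) (use ASFb_maximizes(2)[OF assms] in \<open>auto simp: inner_commute\<close>)
qed (rule Vfun_ge_ASFb[OF assms])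

text \<open>Envelope theorem: the affine function \<open>u \<mapsto> u \<bullet> y + Dbar y\<close> at the maximizer \<open>y\<close>
  supports \<open>V\<close> from below and touches it at \<open>idx good b x\<close>.\<close>
lemma ASFb_eq_pd_Vfun:
  assumes A2: "assm2 good B D mu Y" and S: "open S" "idx good b x \<in> S"
    and finite: "\<forall>u\<in>S. \<bar>Vfun B D mu u\<bar> \<noteq> \<infinity>"
    and diff: "(\<lambda>t. real_of_ereal (Vfun B D mu (idx good b x + t *\<^sub>R axis k 1))) differentiable (at 0)"
  shows "ASFb mu Y x b $ k = pd k (\<lambda>u. real_of_ereal (Vfun B D mu u)) (idx good b x)"
proof -
  define y where "y = ASFb mu Y x b"
  note touch = Vfun_idx_eq_ASFb[OF A2, where b=b and x=x, folded y_def]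
  obtain d where d: "Dbar B D mu y = ereal d"
    using finite S(2) touch by (cases "Dbar B D mu y") auto
  have "pd k (\<lambda>u. real_of_ereal (Vfun B D mu u)) (idx good b x) = y $ k"
  proof (rule pd_eq_of_affine_minorant[OF S])
    show "v \<bullet> y + d \<le> real_of_ereal (Vfun B D mu v)" if "v \<in> S" for v
      using Vfun_ge_ASFb[OF A2, where u=v and b=b and x=x, folded y_def] finite that d
      by (cases "Vfun B D mu v") auto
    show "real_of_ereal (Vfun B D mu (idx good b x)) = idx good b x \<bullet> y + d"
      by (simp add: touch d)
  qed (rule diff)
  then show ?thesis by (simp add: y_def)
qed

lemma pds_ASF_eq_moment_mult:
  fixes good :: "'c::finite \<Rightarrow> 'k::finite" and cs :: "'c list"
  assumes A2: "assm2 good B D mu Y" and A5: "assm5 M B D mu nu Y" and len: "length cs = M"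
  shows "pds cs (\<lambda>x. ASF nu mu Y x $ k) 0
     = integral\<^sup>L nu (\<lambda>b. prod_list (map (\<lambda>c. b $ c) cs))
       * pds (map good cs @ [k]) (\<lambda>u. real_of_ereal (Vfun B D mu u)) 0"
proof -
  define V where "V = (\<lambda>u. real_of_ereal (Vfun B D mu u))"
  from A5 obtain \<epsilon> where \<epsilon>: "\<epsilon> > 0" "\<forall>u\<in>ball 0 \<epsilon>. \<bar>Vfun B D mu u\<bar> \<noteq> \<infinity>"
    and smooth: "Ck_on (Suc M) V (ball 0 \<epsilon>)"
    unfolding assm5_def V_def by blast
  have diff: "(\<lambda>t. pds cs' V (u + t *\<^sub>R axis c 1)) differentiable (at 0)"
    if "length cs' \<le> M" "u \<in> ball 0 \<epsilon>" for cs' c u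
    using smooth that unfolding Ck_on_def by auto
  have "pds cs (\<lambda>x. ASFb mu Y x b $ k) 0
      = prod_list (map (\<lambda>c. b $ c) cs) * pds (map good cs @ [k]) V 0" for b
  proof -
    have "pds cs (\<lambda>x. ASFb mu Y x b $ k) 0
      = prod_list (map (\<lambda>c. b $ c) cs) * pds (map good cs) (pd k V) (idx good b 0)"
    proof (rule pds_comp_idx[where S="ball 0 \<epsilon>" and n=M])
      show "ASFb mu Y x b $ k = pd k V (idx good b x)" if "idx good b x \<in> ball 0 \<epsilon>" for x
        unfolding V_def using diff[of "[]"] that \<epsilon>
        by (intro ASFb_eq_pd_Vfun[OF A2 _ that]) (auto simp: V_def)
      show "(\<lambda>t. pds cs' (pd k V) (u + t *\<^sub>R axis c 1)) differentiable (at 0)"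
        if "length cs' < M" "u \<in> ball 0 \<epsilon>" for cs' c u
        using diff[of "cs' @ [k]"] that by (simp add: pds_append)
    qed (use len \<epsilon> in \<open>auto simp: idx_zero\<close>)
    then show ?thesis by (simp add: idx_zero pds_append)
  qed
  moreover have "pds cs (\<lambda>x. ASF nu mu Y x $ k) 0
      = integral\<^sup>L nu (\<lambda>b. pds cs (\<lambda>x. ASFb mu Y x b $ k) 0)"
    using A5 len unfolding assm5_def by blast
  ultimately show ?thesis by (simp add: V_def)
qed

theorem propositionB1:
  fixes good :: "'c::finite \<Rightarrow> 'k::finite"
    and M :: nat
    and B1 :: "(real^'k) set" and D1 :: "real^'k \<Rightarrow> 'e1 \<Rightarrow> ereal"
    and mu1 :: "'e1 measure" and nu1 :: "(real^'c) measure"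
    and Y1 :: "real^'c \<Rightarrow> real^'c \<Rightarrow> 'e1 \<Rightarrow> real^'k"
    and B2 :: "(real^'k) set" and D2 :: "real^'k \<Rightarrow> 'e2 \<Rightarrow> ereal"
    and mu2 :: "'e2 measure" and nu2 :: "(real^'c) measure"
    and Y2 :: "real^'c \<Rightarrow> real^'c \<Rightarrow> 'e2 \<Rightarrow> real^'k"
    and cs :: "'c list"
  assumes M_pos: "M \<ge> 1"
    and model1: "rc_model good B1 D1 mu1 Y1"
    and A1_1: "assm1 nu1 mu1 Y1" and A2_1: "assm2 good B1 D1 mu1 Y1"
    and A5_1: "assm5 M B1 D1 mu1 nu1 Y1"
    and model2: "rc_model good B2 D2 mu2 Y2"
    and A1_2: "assm1 nu2 mu2 Y2" and A2_2: "assm2 good B2 D2 mu2 Y2"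
    and A5_2: "assm5 M B2 D2 mu2 nu2 Y2"
    and same_ASF: "\<exists>H. open H \<and> 0 \<in> H \<and>
        (\<forall>x\<in>H. (\<forall>c. 0 \<le> x $ c) \<longrightarrow> ASF nu1 mu1 Y1 x = ASF nu2 mu2 Y2 x)"
    and same_V: "\<exists>\<epsilon>>0. \<exists>a::real. \<forall>u\<in>ball 0 \<epsilon>.
        Vfun B1 D1 mu1 u = Vfun B2 D2 mu2 u + ereal a"
    and len: "length cs = M"
  shows "integral\<^sup>L nu1 (\<lambda>b. prod_list (map (\<lambda>c. b $ c) cs))
       = integral\<^sup>L nu2 (\<lambda>b. prod_list (map (\<lambda>c. b $ c) cs))"
proof -
  obtain k :: 'k where True by simp
  define \<gamma> where "\<gamma> = map good cs @ [k]"
  define V1 where "V1 = (\<lambda>u. real_of_ereal (Vfun B1 D1 mu1 u))"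
  define V2 where "V2 = (\<lambda>u. real_of_ereal (Vfun B2 D2 mu2 u))"
  have "pds cs (\<lambda>x. ASF nu1 mu1 Y1 x $ k) 0 = pds cs (\<lambda>x. ASF nu2 mu2 Y2 x $ k) 0"
  proof -
    obtain H where "open H" "0 \<in> H"
      "\<forall>x\<in>H. (\<forall>c. 0 \<le> x $ c) \<longrightarrow> ASF nu1 mu1 Y1 x = ASF nu2 mu2 Y2 x"
      using same_ASF by blast
    then show ?thesis
      using A5_1 A5_2 len unfolding assm5_def by (intro pds_eq_of_eq_on_orthant) auto
  qed
  moreover have "pds \<gamma> V1 0 = pds \<gamma> V2 0"
  proof -
    obtain \<epsilon> a where "\<epsilon> > 0" and shift: "\<forall>u\<in>ball 0 \<epsilon>. Vfun B1 D1 mu1 u = Vfun B2 D2 mu2 u + ereal a"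
      using same_V by blast
    obtain \<epsilon>' where "\<epsilon>' > 0" and finite: "\<forall>u\<in>ball 0 \<epsilon>'. \<bar>Vfun B2 D2 mu2 u\<bar> \<noteq> \<infinity>"
      using A5_2 unfolding assm5_def by blast
    show ?thesis unfolding V1_def V2_def \<gamma>_def
    proof (rule pds_real_of_ereal_shift)
      show "\<forall>\<^sub>F u in nhds 0. Vfun B1 D1 mu1 u = Vfun B2 D2 mu2 u + ereal a"
        using eventually_nhds_ball[OF \<open>\<epsilon> > 0\<close>, of 0] by eventually_elim (use shift in auto)
      show "\<forall>\<^sub>F u in nhds 0. \<bar>Vfun B2 D2 mu2 u\<bar> \<noteq> \<infinity>"
        using eventually_nhds_ball[OF \<open>\<epsilon>' > 0\<close>, of 0] by eventually_elim (use finite in auto)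
    qed simp
  qed
  moreover have "pds \<gamma> V1 0 \<noteq> 0"
    using A5_1 len unfolding assm5_def V1_def \<gamma>_def by simp
  ultimately show ?thesis
    using pds_ASF_eq_moment_mult[OF A2_1 A5_1 len, of k] pds_ASF_eq_moment_mult[OF A2_2 A5_2 len, of k]
    by (simp add: \<gamma>_def V1_def V2_def)
qed

end
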